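(* Let $(v_n)$ be a sequence of weakly increasing functions $v_n:\mathbb{R}\to\mathbb{R}$ such that $\mathrm{Var}_{a^*}[v_n(L_n)]\le\exp[-\lambda n+o(n)]$ for some $\lambda>0$. Then for any interval $[\underline\gamma,\overline\gamma]\ni\hat L_{a^*}$ with $\inf_{\gamma<\underline\gamma}I_{a^*,\hat a}(\gamma)<\lambda$ and $\inf_{\gamma>\overline\gamma}I_{a^*,\hat a}(\gamma)<\lambda$, we have $\lim_{n\to\infty}\big(v_n(\overline\gamma)-v_n(\underline\gamma)\big)=0$.
   Context: Two actions $a^*\neq\hat a$ with Borel probability measures $\mu_{a^*}\neq\mu_{\hat a}$ on a signal space $X$ (subset of a Euclidean space), mutually absolutely continuous, with $\int(\frac{d\mu_{a'}}{d\mu_a})^\lambda d\mu_a<\infty$ for all $\lambda>0$, $a,a'\in\{a^*,\hat a\}$. Under action $a$, $x_1,\dots,x_n$ are i.i.d. from $\mu_a$, with probability, expectation, variance $\mathbb{P}_a,\mathbb{E}_a,\mathrm{Var}_a$. $L_n:=\frac1n\sum_{i=1}^n\log\frac{d\mu_{a^*}}{d\mu_{\hat a}}(x_i)$ and $\hat L_{a^*}:=\mathbb{E}_{a^*}[L_n]$. $I_{a^*,\hat a}(\ell):=\sup_{\lambda\in\mathbb{R}}\big(\lambda\ell-\log\int(\frac{d\mu_{a^*}}{d\mu_{\hat a}}(x))^\lambda d\mu_{a^*}(x)\big)$. $f(n)\le\exp[-\lambda n+o(n)]$ means $\limsup_n\frac1n\log f(n)\le-\lambda$. *)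

theory Defs
  imports "HOL-Probability.Probability"
begin

(* log-likelihood ratio  log (d mu_{a*} / d mu_{a^}) (x);  RN_deriv N M is dM/dN *)
definition llr :: "'a measure \<Rightarrow> 'a measure \<Rightarrow> 'a \<Rightarrow> real" where
  "llr Ms Mh x = ln (enn2real (RN_deriv Mh Ms x))"

definition Ln :: "'a measure \<Rightarrow> 'a measure \<Rightarrow> nat \<Rightarrow> (nat \<Rightarrow> 'a) \<Rightarrow> real" where
  "Ln Ms Mh n \<omega> = (\<Sum>i<n. llr Ms Mh (\<omega> i)) / real n"

(* law of the whole sample sequence under action a*: i.i.d. from Ms *)
definition sample_law :: "'a measure \<Rightarrow> (nat \<Rightarrow> 'a) measure" where
  "sample_law Ms = PiM UNIV (\<lambda>_::nat. Ms)"

definition rate_I :: "'a measure \<Rightarrow> 'a measure \<Rightarrow> real \<Rightarrow> ereal" where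
  "rate_I Ms Mh l = (SUP t\<in>(UNIV::real set).
      ereal (t * l - ln (\<integral>x. enn2real (RN_deriv Mh Ms x) powr t \<partial>Ms)))"

end

theory Submission
  imports Defs
begin

(* Let d n = v n gu - v n gl.  As v n is monotone, v n (L n) \<le> v n gl on {L n \<le> gl} and
   v n (L n) \<ge> v n gu on {L n \<ge> gu}; the mean of v n (L n) is at distance at least d n / 2 from
   one of these two values, so Chebyshev's inequality bounds the variance of v n (L n) from below
   by min (P {L n \<le> gl}) (P {L n \<ge> gu}) * (d n / 2)\<^sup>2.  A Cramer-type lower bound makes both
   probabilities at least exp (- c n) / 2 with c < lam, so (d n)\<^sup>2 decays exponentially.

   The lower bound on P {S \<le> n gl} for the sum S of n log-likelihood ratios is obtained by
   exponential tilting.  For g slightly below gl, the function s g - ln (mgf s) has a maximiser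
   t \<le> 0 (it tends to -\<infinity> at -\<infinity> since the rate function is below lam somewhere left of g,
   and it is \<le> 0 for s \<ge> 0 by Jensen's inequality), so ln (mgf) has slope g at t.  Splitting exp (t S) at the levels n (g - \<delta>) and n (g + \<delta>) gives
     mgf t ^ n \<le> exp (t (g - \<delta>)) ^ n P {S \<le> n (g + \<delta>)}
                   + (exp (h (g - \<delta>)) mgf (t - h)) ^ n + (exp (- h (g + \<delta>)) mgf (t + h)) ^ n,
   and for small h the last two terms are negligible since ln (mgf) has slope g at t. *)

lemma abs_exp_minus_one_minus_le:
  fixes x :: real
  shows "\<bar>exp x - 1 - x\<bar> \<le> x\<^sup>2 * exp \<bar>x\<bar>"
proof -
  obtain t where t: "\<bar>t\<bar> \<le> \<bar>x\<bar>" "exp x = (\<Sum>m<2. x ^ m / fact m) + exp t / fact 2 * x ^ 2"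
    using Maclaurin_exp_le[of x 2] by blast
  then have remainder: "exp x - 1 - x = exp t / 2 * x\<^sup>2"
    by (simp add: numeral_2_eq_2)
  have "exp t / 2 \<le> exp \<bar>x\<bar>"
    using t(1) exp_gt_zero[of t] exp_le_cancel_iff[of t "\<bar>x\<bar>"] by linarith
  then have "exp t / 2 * x\<^sup>2 \<le> exp \<bar>x\<bar> * x\<^sup>2"
    by (rule mult_right_mono) simp
  then show ?thesis
    unfolding remainder by (simp add: mult.commute)
qed

lemma abs_le_exp_plus_exp_minus: "\<bar>y\<bar> \<le> exp y + exp (- y)" for y :: real
  using exp_ge_add_one_self[of y] exp_ge_add_one_self[of "- y"]
    exp_gt_zero[of y] exp_gt_zero[of "- y"]
  by linarith

lemma power2_mult_exp_abs_le: "y\<^sup>2 * exp \<bar>y\<bar> \<le> 2 * (exp (2 * y) + exp (- 2 * y))" for y :: real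
proof -
  have "y\<^sup>2 * exp \<bar>y\<bar> \<le> 2 * exp \<bar>y\<bar> * exp \<bar>y\<bar>"
    using exp_lower_Taylor_quadratic[of "\<bar>y\<bar>"] by (intro mult_right_mono) auto
  also have "\<dots> = 2 * exp (2 * \<bar>y\<bar>)"
    by (simp flip: exp_add)
  also have "\<dots> \<le> 2 * (exp (2 * y) + exp (- 2 * y))"
    by (cases "y \<ge> 0") auto
  finally show ?thesis .
qed

lemma exp_mult_le_split:
  fixes t h x a b :: real
  assumes "t \<le> 0" "h > 0"
  shows "exp (t * x) \<le> exp (t * a) * (if x \<le> b then 1 else 0)
    + exp (h * a) * exp ((t - h) * x) + exp (- (h * b)) * exp ((t + h) * x)"
proof -
  consider "x < a" | "a \<le> x" "x \<le> b" | "b < x"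
    by linarith
  then show ?thesis
  proof cases
    case 1
    then have "t * x \<le> h * a + (t - h) * x"
      using assms by (simp add: algebra_simps)
    then have "exp (t * x) \<le> exp (h * a) * exp ((t - h) * x)"
      by (simp flip: exp_add)
    then show ?thesis
      by (simp add: add_increasing add_increasing2)
  next
    case 2
    then have "exp (t * x) \<le> exp (t * a) * (if x \<le> b then 1 else 0)"
      using assms by (simp add: mult_left_mono_neg)
    then show ?thesis
      by (simp add: add_increasing2)
  next
    case 3
    then have "t * x \<le> - (h * b) + (t + h) * x"
      using assms by (simp add: algebra_simps)
    then have "exp (t * x) \<le> exp (- (h * b)) * exp ((t + h) * x)"
      by (simp flip: exp_add)
    then show ?thesis
      by (simp add: add_increasing)
  qed
qed

lemma eventually_power_add_power_le_half:
  fixes a b L :: real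
  assumes "0 \<le> a" "a < L" "0 \<le> b" "b < L"
  shows "\<forall>\<^sub>F n in sequentially. a ^ n + b ^ n \<le> L ^ n / 2"
proof -
  have "(\<lambda>n. (a / L) ^ n + (b / L) ^ n) \<longlonglongrightarrow> 0 + 0"
    using assms by (intro tendsto_add LIMSEQ_power_zero) auto
  then have "\<forall>\<^sub>F n in sequentially. (a / L) ^ n + (b / L) ^ n < 1 / 2"
    by (rule order_tendstoD) simp
  then show ?thesis
    by eventually_elim (use assms in \<open>simp add: power_divide field_simps\<close>)
qed

lemma tendsto_zero_of_exp_weighted_power2_le:
  fixes x :: "nat \<Rightarrow> real"
  assumes "c < d"
    and bound: "\<forall>\<^sub>F n in sequentially. exp (- (c * real n)) * (x n)\<^sup>2 \<le> K * exp (- d * real n)"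
  shows "x \<longlonglongrightarrow> 0"
proof -
  have "\<forall>\<^sub>F n in sequentially. norm ((x n)\<^sup>2) \<le> K * exp (- (d - c)) ^ n"
    using bound
  proof eventually_elim
    case (elim n)
    then have "(x n)\<^sup>2 \<le> K * (exp (- d * real n) / exp (- (c * real n)))"
      by (simp add: pos_le_divide_eq mult.commute)
    also have "exp (- d * real n) / exp (- (c * real n)) = exp (real n * (- (d - c)))"
      by (simp only: exp_diff[symmetric]) (simp add: algebra_simps)
    also have "\<dots> = exp (- (d - c)) ^ n"
      by (rule exp_of_nat_mult)
    finally show ?case
      by simp
  qed
  moreover have "(\<lambda>n. K * exp (- (d - c)) ^ n) \<longlonglongrightarrow> 0"
    using assms(1) by (intro tendsto_mult_right_zero LIMSEQ_power_zero) simp_all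
  ultimately have "(\<lambda>n. (x n)\<^sup>2) \<longlonglongrightarrow> 0"
    by (rule Lim_null_comparison)
  then have "(\<lambda>n. sqrt ((x n)\<^sup>2)) \<longlonglongrightarrow> sqrt 0"
    by (rule tendsto_real_sqrt)
  then show ?thesis
    by (simp add: tendsto_rabs_zero_iff)
qed

lemma has_real_derivative_of_quadratic_remainder:
  fixes f :: "real \<Rightarrow> real"
  assumes remainder: "\<And>h. \<bar>h\<bar> \<le> 1 \<Longrightarrow> \<bar>f (s + h) - f s - h * D\<bar> \<le> h\<^sup>2 * K"
  shows "(f has_real_derivative D) (at s)"
proof -
  have "((\<lambda>y. (f y - f s) / (y - s) - D) \<longlongrightarrow> 0) (at s)"
  proof (rule Lim_null_comparison)
    have "norm ((f y - f s) / (y - s) - D) \<le> \<bar>y - s\<bar> * K" if "y \<noteq> s" "dist y s < 1" for y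
    proof -
      have "norm ((f y - f s) / (y - s) - D) = \<bar>f (s + (y - s)) - f s - (y - s) * D\<bar> / \<bar>y - s\<bar>"
        using that by (simp add: field_simps)
      also have "\<dots> \<le> (y - s)\<^sup>2 * K / \<bar>y - s\<bar>"
        using remainder[of "y - s"] that by (intro divide_right_mono) (auto simp: dist_real_def)
      also have "\<dots> = \<bar>y - s\<bar> * K"
        using that by (simp add: power2_eq_square divide_simps)
      finally show ?thesis .
    qed
    then show "\<forall>\<^sub>F y in at s. norm ((f y - f s) / (y - s) - D) \<le> \<bar>y - s\<bar> * K"
      unfolding eventually_at by (intro exI[of _ 1]) auto
    have "((\<lambda>y. \<bar>y - s\<bar> * K) \<longlongrightarrow> \<bar>s - s\<bar> * K) (at s)"
      by (intro tendsto_intros)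
    then show "((\<lambda>y. \<bar>y - s\<bar> * K) \<longlongrightarrow> 0) (at s)"
      by simp
  qed
  then show ?thesis
    unfolding has_field_derivative_iff by (rule LIM_zero_cancel)
qed

lemma ln_has_real_derivative_window:
  fixes f :: "real \<Rightarrow> real"
  assumes pos: "\<And>s. f s > 0" and deriv: "((\<lambda>s. ln (f s)) has_real_derivative D) (at t)"
    and "\<delta> > 0"
  obtains h where "h > 0" "f (t - h) * exp (h * (D - \<delta>)) < f t"
    "f (t + h) * exp (- (h * (D + \<delta>))) < f t"
proof -
  have "((\<lambda>s. (D + \<delta>) * s - ln (f s)) has_real_derivative (D + \<delta>) - D) (at t)"
    by (rule DERIV_diff[OF _ deriv]) (auto intro!: derivative_eq_intros)
  then obtain d1 where "d1 > 0"
    and right: "\<And>h. 0 < h \<Longrightarrow> h < d1 \<Longrightarrow> (D + \<delta>) * t - ln (f t) < (D + \<delta>) * (t + h) - ln (f (t + h))"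
    using DERIV_pos_inc_right \<open>\<delta> > 0\<close> by fastforce
  have "((\<lambda>s. ln (f s) - (D - \<delta>) * s) has_real_derivative D - (D - \<delta>)) (at t)"
    by (rule DERIV_diff[OF deriv]) (auto intro!: derivative_eq_intros)
  then obtain d2 where "d2 > 0"
    and left: "\<And>h. 0 < h \<Longrightarrow> h < d2 \<Longrightarrow> ln (f (t - h)) - (D - \<delta>) * (t - h) < ln (f t) - (D - \<delta>) * t"
    using DERIV_pos_inc_left \<open>\<delta> > 0\<close> by fastforce
  define h where "h = min d1 d2 / 2"
  have h: "0 < h" "h < d1" "h < d2"
    using \<open>d1 > 0\<close> \<open>d2 > 0\<close> by (auto simp: h_def)
  have "f (t - h) * exp (h * (D - \<delta>)) = exp (ln (f (t - h)) + h * (D - \<delta>))"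
    using pos by (simp add: exp_add)
  also have "\<dots> < exp (ln (f t))"
    using left[OF h(1,3)] by (simp add: algebra_simps)
  finally have below: "f (t - h) * exp (h * (D - \<delta>)) < f t"
    using pos by simp
  have "f (t + h) * exp (- (h * (D + \<delta>))) = exp (ln (f (t + h)) - h * (D + \<delta>))"
    using pos[of "t + h"] by (simp add: exp_diff exp_minus divide_inverse)
  also have "\<dots> < exp (ln (f t))"
    using right[OF h(1,2)] by (simp add: algebra_simps)
  finally have "f (t + h) * exp (- (h * (D + \<delta>))) < f t"
    using pos by simp
  with below show ?thesis
    using that h(1) by blast
qed

lemma (in prob_space) variance_ge_of_mono:
  fixes w :: "real \<Rightarrow> real" and Z :: "'a \<Rightarrow> real"
  assumes "mono w" and [measurable]: "Z \<in> borel_measurable M"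
    and square_integrable: "integrable M (\<lambda>x. (w (Z x))\<^sup>2)" and "a \<le> b"
  shows "min (prob {x \<in> space M. Z x \<le> a}) (prob {x \<in> space M. b \<le> Z x}) * ((w b - w a) / 2)\<^sup>2
    \<le> variance (\<lambda>x. w (Z x))"
proof -
  let ?d = "(w b - w a) / 2"
  let ?\<mu> = "expectation (\<lambda>x. w (Z x))"
  have [measurable]: "w \<in> borel_measurable borel"
    using \<open>mono w\<close> by (rule borel_measurable_mono)
  have "w a \<le> w b"
    using \<open>mono w\<close> \<open>a \<le> b\<close> by (rule monoD)
  show ?thesis
  proof (cases "w a = w b")
    case True
    then show ?thesis
      by (simp add: integral_nonneg_AE)
  next
    case False
    with \<open>w a \<le> w b\<close> have "?d > 0"
      by simp
    have "min (prob {x \<in> space M. Z x \<le> a}) (prob {x \<in> space M. b \<le> Z x})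
      \<le> prob {x \<in> space M. ?d \<le> \<bar>w (Z x) - ?\<mu>\<bar>}"
    proof (cases "(w a + w b) / 2 \<le> ?\<mu>")
      case True
      have "prob {x \<in> space M. Z x \<le> a} \<le> prob {x \<in> space M. ?d \<le> \<bar>w (Z x) - ?\<mu>\<bar>}"
      proof (intro finite_measure_mono subsetI)
        fix x assume "x \<in> {x \<in> space M. Z x \<le> a}"
        then have "x \<in> space M" "w (Z x) \<le> w a"
          using monoD[OF \<open>mono w\<close>] by auto
        moreover from \<open>w (Z x) \<le> w a\<close> True have "?d \<le> ?\<mu> - w (Z x)"
          by simp
        ultimately show "x \<in> {x \<in> space M. ?d \<le> \<bar>w (Z x) - ?\<mu>\<bar>}"
          by (auto simp: abs_if)
      qed measurable
      then show ?thesis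
        by (simp add: min.coboundedI1)
    next
      case False
      have "prob {x \<in> space M. b \<le> Z x} \<le> prob {x \<in> space M. ?d \<le> \<bar>w (Z x) - ?\<mu>\<bar>}"
      proof (intro finite_measure_mono subsetI)
        fix x assume "x \<in> {x \<in> space M. b \<le> Z x}"
        then have "x \<in> space M" "w b \<le> w (Z x)"
          using monoD[OF \<open>mono w\<close>] by auto
        moreover from \<open>w b \<le> w (Z x)\<close> False have "?d \<le> w (Z x) - ?\<mu>"
          by simp
        ultimately show "x \<in> {x \<in> space M. ?d \<le> \<bar>w (Z x) - ?\<mu>\<bar>}"
          by (auto simp: abs_if)
      qed measurable
      then show ?thesis
        by (simp add: min.coboundedI2)
    qed
    also have "\<dots> \<le> variance (\<lambda>x. w (Z x)) / ?d\<^sup>2"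
      using square_integrable \<open>?d > 0\<close> by (intro Chebyshev_inequality) auto
    finally show ?thesis
      using \<open>?d > 0\<close> by (simp add: pos_le_divide_eq)
  qed
qed

lemma prob_space_sample_law: "prob_space M \<Longrightarrow> prob_space (sample_law M)"
  unfolding sample_law_def by (rule prob_space_PiM)

lemma
  fixes f :: "'a \<Rightarrow> real"
  assumes P: "prob_space P" and f: "integrable P f"
  shows integrable_sample_law_prod: "integrable (sample_law P) (\<lambda>\<omega>. \<Prod>i<n. f (\<omega> i))"
    and integral_sample_law_prod: "(\<integral>\<omega>. (\<Prod>i<n. f (\<omega> i)) \<partial>sample_law P) = (integral\<^sup>L P f) ^ n"
proof -
  interpret product_prob_space "\<lambda>_::nat. P" UNIV
    by (simp add: product_prob_space_def product_prob_space_axioms_def product_sigma_finite_def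
        prob_space_imp_sigma_finite P)
  have [measurable]: "f \<in> borel_measurable P"
    using f by auto
  define G where "G y = (\<Prod>i<n. f (y i))" for y :: "nat \<Rightarrow> 'a"
  have G: "G \<in> borel_measurable (PiM {..<n} (\<lambda>_. P))"
    unfolding G_def by measurable
  have restrict: "(\<lambda>x. restrict x {..<n}) \<in> sample_law P \<rightarrow>\<^sub>M PiM {..<n} (\<lambda>_. P)"
    unfolding sample_law_def by (rule measurable_restrict_subset) simp
  have distr:
    "distr (sample_law P) (PiM {..<n} (\<lambda>_. P)) (\<lambda>x. restrict x {..<n}) = PiM {..<n} (\<lambda>_. P)"
    unfolding sample_law_def by (rule distr_PiM_restrict_finite) auto
  have G_restrict: "G (restrict x {..<n}) = (\<Prod>i<n. f (x i))" for x
    unfolding G_def by (intro prod.cong) auto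
  have "integrable (PiM {..<n} (\<lambda>_. P)) G"
    unfolding G_def by (rule product_integrable_prod) (auto simp: f)
  then show "integrable (sample_law P) (\<lambda>\<omega>. \<Prod>i<n. f (\<omega> i))"
    using integrable_distr_eq[OF restrict G] distr G_restrict by simp
  have "integral\<^sup>L (PiM {..<n} (\<lambda>_. P)) G = (integral\<^sup>L P f) ^ n"
    unfolding G_def by (subst product_integral_prod) (auto simp: f)
  then show "(\<integral>\<omega>. (\<Prod>i<n. f (\<omega> i)) \<partial>sample_law P) = (integral\<^sup>L P f) ^ n"
    using integral_distr[OF restrict G] distr G_restrict by simp
qed

locale exp_moments = prob_space +
  fixes Y :: "'a \<Rightarrow> real"
  assumes borel_measurable_Y[measurable]: "Y \<in> borel_measurable M"
    and integrable_exp_mult_Y: "\<And>s. integrable M (\<lambda>x. exp (s * Y x))"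
begin

definition mgf :: "real \<Rightarrow> real" where
  "mgf s = (\<integral>x. exp (s * Y x) \<partial>M)"

lemma integrable_Y_mult_exp: "integrable M (\<lambda>x. Y x * exp (s * Y x))"
proof (rule Bochner_Integration.integrable_bound)
  show "integrable M (\<lambda>x. exp ((s + 1) * Y x) + exp ((s - 1) * Y x))"
    by (intro Bochner_Integration.integrable_add integrable_exp_mult_Y)
  have "\<bar>Y x\<bar> * exp (s * Y x) \<le> (exp (Y x) + exp (- Y x)) * exp (s * Y x)" for x
    by (intro mult_right_mono abs_le_exp_plus_exp_minus) simp
  also have "(exp (Y x) + exp (- Y x)) * exp (s * Y x)
      = exp ((s + 1) * Y x) + exp ((s - 1) * Y x)" for x
    by (simp add: algebra_simps flip: exp_add)
  finally show "AE x in M. norm (Y x * exp (s * Y x))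
      \<le> norm (exp ((s + 1) * Y x) + exp ((s - 1) * Y x))"
    by (simp add: abs_mult)
qed measurable

lemma integrable_Y: "integrable M Y"
  using integrable_Y_mult_exp[of 0] by simp

lemma integrable_Y_sq_mult_exp: "integrable M (\<lambda>x. (Y x)\<^sup>2 * exp \<bar>Y x\<bar> * exp (s * Y x))"
proof (rule Bochner_Integration.integrable_bound)
  show "integrable M (\<lambda>x. 2 * (exp ((s + 2) * Y x) + exp ((s - 2) * Y x)))"
    by (intro Bochner_Integration.integrable_add integrable_mult_right integrable_exp_mult_Y)
  have "(Y x)\<^sup>2 * exp \<bar>Y x\<bar> * exp (s * Y x)
      \<le> 2 * (exp (2 * Y x) + exp (- 2 * Y x)) * exp (s * Y x)" for x
    by (intro mult_right_mono power2_mult_exp_abs_le) auto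
  also have "2 * (exp (2 * Y x) + exp (- 2 * Y x)) * exp (s * Y x)
      = 2 * (exp ((s + 2) * Y x) + exp ((s - 2) * Y x))" for x
    by (simp add: algebra_simps flip: exp_add)
  finally show "AE x in M. norm ((Y x)\<^sup>2 * exp \<bar>Y x\<bar> * exp (s * Y x))
      \<le> norm (2 * (exp ((s + 2) * Y x) + exp ((s - 2) * Y x)))"
    by simp
qed measurable

lemma mgf_0: "mgf 0 = 1"
  by (simp add: mgf_def prob_space)

lemma exp_expectation_le_mgf: "exp (s * expectation Y) \<le> mgf s"
proof -
  let ?m = "expectation Y"
  have "(\<integral>x. exp (s * ?m) * (1 + s * (Y x - ?m)) \<partial>M) \<le> mgf s"
    unfolding mgf_def
  proof (rule integral_mono)
    show "integrable M (\<lambda>x. exp (s * ?m) * (1 + s * (Y x - ?m)))"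
      using integrable_Y by (intro integrable_mult_right integrable_add integrable_diff) auto
    have "exp (s * ?m) * (1 + s * (Y x - ?m)) \<le> exp (s * ?m) * exp (s * (Y x - ?m))" for x
      using exp_ge_add_one_self[of "s * (Y x - ?m)"] by (intro mult_left_mono) auto
    then show "exp (s * ?m) * (1 + s * (Y x - ?m)) \<le> exp (s * Y x)" for x
      by (simp add: algebra_simps flip: exp_add)
  qed (rule integrable_exp_mult_Y)
  moreover have "(\<integral>x. exp (s * ?m) * (1 + s * (Y x - ?m)) \<partial>M) = exp (s * ?m)"
    using integrable_Y by (simp add: algebra_simps prob_space)
  ultimately show ?thesis
    by simp
qed

lemma mgf_pos: "mgf s > 0"
  using exp_expectation_le_mgf[of s] exp_gt_zero[of "s * expectation Y"] by linarith

lemma expectation_le_ln_mgf: "s * expectation Y \<le> ln (mgf s)"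
  using exp_expectation_le_mgf[of s] mgf_pos[of s] by (simp add: ln_ge_iff)

lemma mgf_quadratic_remainder:
  assumes "\<bar>h\<bar> \<le> 1"
  shows "\<bar>mgf (s + h) - mgf s - h * (\<integral>x. Y x * exp (s * Y x) \<partial>M)\<bar>
    \<le> h\<^sup>2 * (\<integral>x. (Y x)\<^sup>2 * exp \<bar>Y x\<bar> * exp (s * Y x) \<partial>M)"
proof -
  let ?r = "\<lambda>x. exp ((s + h) * Y x) - exp (s * Y x) - h * (Y x * exp (s * Y x))"
  have "mgf (s + h) - mgf s - h * (\<integral>x. Y x * exp (s * Y x) \<partial>M) = (\<integral>x. ?r x \<partial>M)"
    unfolding mgf_def using integrable_exp_mult_Y integrable_Y_mult_exp
    by (simp add: Bochner_Integration.integral_diff integrable_mult_right)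
  then have "\<bar>mgf (s + h) - mgf s - h * (\<integral>x. Y x * exp (s * Y x) \<partial>M)\<bar> \<le> (\<integral>x. \<bar>?r x\<bar> \<partial>M)"
    using integral_abs_bound by simp
  also have "\<dots> \<le> (\<integral>x. h\<^sup>2 * ((Y x)\<^sup>2 * exp \<bar>Y x\<bar> * exp (s * Y x)) \<partial>M)"
  proof (rule integral_mono)
    show "integrable M (\<lambda>x. \<bar>?r x\<bar>)"
      using integrable_exp_mult_Y integrable_Y_mult_exp
      by (intro integrable_abs Bochner_Integration.integrable_diff integrable_mult_right)
    show "integrable M (\<lambda>x. h\<^sup>2 * ((Y x)\<^sup>2 * exp \<bar>Y x\<bar> * exp (s * Y x)))"
      using integrable_Y_sq_mult_exp by (rule integrable_mult_right)
    fix x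
    have "\<bar>h\<bar> * \<bar>Y x\<bar> \<le> 1 * \<bar>Y x\<bar>"
      using assms by (intro mult_right_mono) auto
    then have "exp \<bar>h * Y x\<bar> \<le> exp \<bar>Y x\<bar>"
      by (simp add: abs_mult)
    have "?r x = exp (s * Y x) * (exp (h * Y x) - 1 - h * Y x)"
      by (simp add: algebra_simps flip: exp_add)
    then have "\<bar>?r x\<bar> = exp (s * Y x) * \<bar>exp (h * Y x) - 1 - h * Y x\<bar>"
      by (simp add: abs_mult)
    also have "\<dots> \<le> exp (s * Y x) * ((h * Y x)\<^sup>2 * exp \<bar>h * Y x\<bar>)"
      by (intro mult_left_mono abs_exp_minus_one_minus_le) auto
    also have "\<dots> \<le> exp (s * Y x) * ((h * Y x)\<^sup>2 * exp \<bar>Y x\<bar>)"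
      using \<open>exp \<bar>h * Y x\<bar> \<le> exp \<bar>Y x\<bar>\<close> by (intro mult_left_mono) auto
    also have "\<dots> = h\<^sup>2 * ((Y x)\<^sup>2 * exp \<bar>Y x\<bar> * exp (s * Y x))"
      by (simp add: power_mult_distrib)
    finally show "\<bar>?r x\<bar> \<le> h\<^sup>2 * ((Y x)\<^sup>2 * exp \<bar>Y x\<bar> * exp (s * Y x))" .
  qed
  also have "\<dots> = h\<^sup>2 * (\<integral>x. (Y x)\<^sup>2 * exp \<bar>Y x\<bar> * exp (s * Y x) \<partial>M)"
    by (rule integral_mult_right_zero)
  finally show ?thesis .
qed

lemma ln_mgf_has_real_derivative:
  "((\<lambda>s. ln (mgf s)) has_real_derivative (\<integral>x. Y x * exp (s * Y x) \<partial>M) / mgf s) (at s)"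
proof -
  have "(mgf has_real_derivative (\<integral>x. Y x * exp (s * Y x) \<partial>M)) (at s)"
    using mgf_quadratic_remainder by (rule has_real_derivative_of_quadratic_remainder)
  from DERIV_chain2[OF DERIV_ln_divide[OF mgf_pos] this] show ?thesis
    by simp
qed

lemma exists_ln_mgf_slope:
  assumes "gam < g" "g \<le> expectation Y" and rate: "\<And>s. s * gam - ln (mgf s) \<le> c"
  obtains t where "t \<le> 0" "((\<lambda>s. ln (mgf s)) has_real_derivative g) (at t)"
    "t * g - ln (mgf t) \<le> c"
proof -
  define \<psi> where "\<psi> s = s * g - ln (mgf s)" for s
  define d\<psi> where "d\<psi> s = g - (\<integral>x. Y x * exp (s * Y x) \<partial>M) / mgf s" for s
  have \<psi>_deriv: "(\<psi> has_real_derivative d\<psi> s) (at s)" for s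
    unfolding \<psi>_def d\<psi>_def
    by (rule DERIV_diff[OF _ ln_mgf_has_real_derivative]) (auto intro!: derivative_eq_intros)
  define R where "R = (\<bar>c\<bar> + 1) / (g - gam)"
  have "R > 0" and R: "R * (g - gam) = \<bar>c\<bar> + 1"
    using assms(1) by (auto simp: R_def)
  have "continuous_on {-R..0} \<psi>"
    using \<psi>_deriv by (intro continuous_at_imp_continuous_on ballI DERIV_isCont) blast
  then obtain t where t: "t \<in> {-R..0}" and t_max: "\<And>y. y \<in> {-R..0} \<Longrightarrow> \<psi> y \<le> \<psi> t"
    using continuous_attains_sup[of "{-R..0}" \<psi>] \<open>R > 0\<close> by auto
  have "0 \<le> \<psi> t"
    using t_max[of 0] \<open>R > 0\<close> by (simp add: \<psi>_def mgf_0)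
  \<comment> \<open>The maximum on \<open>{-R..0}\<close> is global: left of \<open>-R\<close> the rate bound forces \<open>\<psi> < 0\<close>,
    right of \<open>0\<close> Jensen's inequality gives \<open>\<psi> \<le> 0\<close>.\<close>
  have "\<psi> y \<le> \<psi> t" for y
  proof -
    consider "y < -R" | "y \<in> {-R..0}" | "y > 0"
      by fastforce
    then show ?thesis
    proof cases
      case 1
      have "\<psi> y = y * (g - gam) + (y * gam - ln (mgf y))"
        by (simp add: \<psi>_def algebra_simps)
      also have "\<dots> \<le> -R * (g - gam) + c"
        using 1 rate[of y] assms(1) by (intro add_mono mult_right_mono) auto
      finally show ?thesis
        using R \<open>0 \<le> \<psi> t\<close> by linarith
    next
      case 2
      then show ?thesis
        by (rule t_max)
    next
      case 3
      have "\<psi> y \<le> y * (g - expectation Y)"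
        using expectation_le_ln_mgf[of y] by (simp add: \<psi>_def algebra_simps)
      also have "\<dots> \<le> 0"
        using 3 assms(2) by (intro mult_nonneg_nonpos) auto
      finally show ?thesis
        using \<open>0 \<le> \<psi> t\<close> by linarith
    qed
  qed
  then have "d\<psi> t = 0"
    by (intro DERIV_local_max[OF \<psi>_deriv zero_less_one]) blast
  then have "((\<lambda>s. ln (mgf s)) has_real_derivative g) (at t)"
    using ln_mgf_has_real_derivative[of t] by (simp add: d\<psi>_def)
  moreover have "t * g - ln (mgf t) \<le> c"
    using t rate[of t] mult_left_mono_neg[of gam g t] assms(1) by auto
  ultimately show ?thesis
    using that t by auto
qed

lemma exp_moments_uminus: "exp_moments M (\<lambda>x. - Y x)"
  by unfold_locales (use integrable_exp_mult_Y[of "- _"] in simp_all)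

lemma mgf_uminus: "exp_moments.mgf M (\<lambda>x. - Y x) s = mgf (- s)"
  by (simp add: exp_moments.mgf_def[OF exp_moments_uminus] mgf_def)

lemma
  shows integrable_exp_mult_sum: "integrable (sample_law M) (\<lambda>\<omega>. exp (s * (\<Sum>i<n. Y (\<omega> i))))"
    and integral_exp_mult_sum: "(\<integral>\<omega>. exp (s * (\<Sum>i<n. Y (\<omega> i))) \<partial>sample_law M) = mgf s ^ n"
  using integrable_sample_law_prod[OF prob_space_axioms integrable_exp_mult_Y, of s n]
    integral_sample_law_prod[OF prob_space_axioms integrable_exp_mult_Y, of s n]
  by (simp_all add: sum_distrib_left exp_sum mgf_def)

lemma mgf_power_le_prob_sum_le:
  assumes "t \<le> 0" "h > 0"
  shows "mgf t ^ n \<le> exp (t * \<alpha>) ^ n *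
      \<P>(\<omega> in sample_law M. (\<Sum>i<n. Y (\<omega> i)) \<le> real n * \<beta>)
    + (exp (h * \<alpha>) * mgf (t - h)) ^ n + (exp (- (h * \<beta>)) * mgf (t + h)) ^ n"
proof -
  interpret S: prob_space "sample_law M"
    by (rule prob_space_sample_law[OF prob_space_axioms])
  define S where "S \<omega> = (\<Sum>i<n. Y (\<omega> i))" for \<omega> :: "nat \<Rightarrow> 'a"
  define B where "B = {\<omega> \<in> space (sample_law M). S \<omega> \<le> real n * \<beta>}"
  have [measurable]: "S \<in> borel_measurable (sample_law M)"
    unfolding S_def sample_law_def by measurable
  have B: "B \<in> sets (sample_law M)"
    unfolding B_def by measurable
  note integrable_S = integrable_exp_mult_sum[of _ n, folded S_def]
  have integrable_B: "integrable (sample_law M) (\<lambda>\<omega>. exp (t * (real n * \<alpha>)) * indicator B \<omega>)"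
    using B by (intro integrable_mult_right) (auto simp: S.emeasure_finite less_top[symmetric])
  have "mgf t ^ n = (\<integral>\<omega>. exp (t * S \<omega>) \<partial>sample_law M)"
    by (simp add: S_def integral_exp_mult_sum)
  also have "\<dots> \<le> (\<integral>\<omega>. exp (t * (real n * \<alpha>)) * indicator B \<omega>
      + exp (h * (real n * \<alpha>)) * exp ((t - h) * S \<omega>)
      + exp (- (h * (real n * \<beta>))) * exp ((t + h) * S \<omega>) \<partial>sample_law M)"
  proof (rule integral_mono)
    fix \<omega> assume "\<omega> \<in> space (sample_law M)"
    then show "exp (t * S \<omega>) \<le> exp (t * (real n * \<alpha>)) * indicator B \<omega>
      + exp (h * (real n * \<alpha>)) * exp ((t - h) * S \<omega>)
      + exp (- (h * (real n * \<beta>))) * exp ((t + h) * S \<omega>)"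
      using exp_mult_le_split[OF assms, of "S \<omega>" "real n * \<alpha>" "real n * \<beta>"]
      by (cases "S \<omega> \<le> real n * \<beta>") (simp_all add: B_def)
  qed (use integrable_S integrable_B in auto)
  also have "\<dots> = exp (t * (real n * \<alpha>)) * measure (sample_law M) B
      + exp (h * (real n * \<alpha>)) * mgf (t - h) ^ n + exp (- (h * (real n * \<beta>))) * mgf (t + h) ^ n"
    using integrable_S integrable_B B
    by (simp add: S_def integral_exp_mult_sum Int_absorb2 sets.sets_into_space)
  also have "\<dots> = exp (t * \<alpha>) ^ n * measure (sample_law M) B
      + (exp (h * \<alpha>) * mgf (t - h)) ^ n + (exp (- (h * \<beta>)) * mgf (t + h)) ^ n"
    by (simp add: power_mult_distrib algebra_simps flip: exp_of_nat_mult)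
  finally show ?thesis
    by (simp add: B_def S_def)
qed

lemma eventually_exp_le_prob_sum_le:
  assumes "t \<le> 0" "h > 0"
    and left: "mgf (t - h) * exp (h * \<alpha>) < mgf t" and right: "mgf (t + h) * exp (- (h * \<beta>)) < mgf t"
  shows "\<forall>\<^sub>F n in sequentially. exp (real n * (ln (mgf t) - t * \<alpha>)) / 2
    \<le> \<P>(\<omega> in sample_law M. (\<Sum>i<n. Y (\<omega> i)) \<le> real n * \<beta>)"
proof -
  have "\<forall>\<^sub>F n in sequentially.
      (exp (h * \<alpha>) * mgf (t - h)) ^ n + (exp (- (h * \<beta>)) * mgf (t + h)) ^ n \<le> mgf t ^ n / 2"
    using left right mgf_pos
    by (intro eventually_power_add_power_le_half) (auto simp: mult.commute less_imp_le)
  then show ?thesis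
  proof eventually_elim
    case (elim n)
    then have "mgf t ^ n / 2 \<le> exp (t * \<alpha>) ^ n
        * \<P>(\<omega> in sample_law M. (\<Sum>i<n. Y (\<omega> i)) \<le> real n * \<beta>)"
      using mgf_power_le_prob_sum_le[OF assms(1,2), of n \<alpha> \<beta>] by linarith
    then show ?case
      using mgf_pos[of t]
      by (simp add: exp_of_nat_mult exp_diff power_divide divide_simps mult.commute)
  qed
qed

lemma prob_sum_le_lower_bound:
  assumes "gam < gl" "gl \<le> expectation Y" and rate: "\<And>s. s * gam - ln (mgf s) \<le> c"
    and "c < c'"
  shows "\<forall>\<^sub>F n in sequentially. exp (- (c' * real n)) / 2
    \<le> \<P>(\<omega> in sample_law M. (\<Sum>i<n. Y (\<omega> i)) \<le> real n * gl)"
proof -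
  interpret S: prob_space "sample_law M"
    by (rule prob_space_sample_law[OF prob_space_axioms])
  define g where "g = (gam + gl) / 2"
  obtain t where "t \<le> 0" and slope: "((\<lambda>s. ln (mgf s)) has_real_derivative g) (at t)"
    and rate_t: "t * g - ln (mgf t) \<le> c"
    using exists_ln_mgf_slope[of gam g c] assms by (auto simp: g_def)
  define \<delta> where "\<delta> = min (gl - g) ((c' - c) / (\<bar>t\<bar> + 1))"
  have "\<delta> > 0"
    using assms by (auto simp: \<delta>_def g_def)
  obtain h where "h > 0" and left: "mgf (t - h) * exp (h * (g - \<delta>)) < mgf t"
    and right: "mgf (t + h) * exp (- (h * (g + \<delta>))) < mgf t"
    using ln_has_real_derivative_window[OF mgf_pos slope \<open>\<delta> > 0\<close>] by blast
  have "\<bar>t\<bar> * \<delta> \<le> \<bar>t\<bar> * ((c' - c) / (\<bar>t\<bar> + 1))"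
    by (intro mult_left_mono) (auto simp: \<delta>_def)
  also have "\<dots> \<le> c' - c"
    using assms(4) by (simp add: divide_simps)
  finally have rate_tilted: "t * (g - \<delta>) - ln (mgf t) \<le> c'"
    using rate_t \<open>t \<le> 0\<close> by (simp add: algebra_simps abs_if split: if_splits)
  have "g + \<delta> \<le> gl"
    by (simp add: \<delta>_def)
  from eventually_exp_le_prob_sum_le[OF \<open>t \<le> 0\<close> \<open>h > 0\<close> left right] show ?thesis
  proof eventually_elim
    case (elim n)
    let ?A = "\<lambda>b. {\<omega> \<in> space (sample_law M). (\<Sum>i<n. Y (\<omega> i)) \<le> real n * b}"
    have "- c' * real n \<le> (ln (mgf t) - t * (g - \<delta>)) * real n"
      using rate_tilted by (intro mult_right_mono) auto
    then have "exp (- (c' * real n)) / 2 \<le> exp (real n * (ln (mgf t) - t * (g - \<delta>))) / 2"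
      by (simp add: mult.commute)
    also note elim
    also have "measure (sample_law M) (?A (g + \<delta>)) \<le> measure (sample_law M) (?A gl)"
    proof (rule S.finite_measure_mono)
      show "?A (g + \<delta>) \<subseteq> ?A gl"
        using mult_left_mono[OF \<open>g + \<delta> \<le> gl\<close>, of "real n"] by auto
      show "?A gl \<in> sets (sample_law M)"
        unfolding sample_law_def by measurable
    qed
    finally show ?case .
  qed
qed

lemma prob_sum_ge_lower_bound:
  assumes "gu < gam" "expectation Y \<le> gu" and rate: "\<And>s. s * gam - ln (mgf s) \<le> c"
    and "c < c'"
  shows "\<forall>\<^sub>F n in sequentially. exp (- (c' * real n)) / 2
    \<le> \<P>(\<omega> in sample_law M. real n * gu \<le> (\<Sum>i<n. Y (\<omega> i)))"
proof -
  interpret neg: exp_moments M "\<lambda>x. - Y x"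
    by (rule exp_moments_uminus)
  have "\<forall>\<^sub>F n in sequentially. exp (- (c' * real n)) / 2
    \<le> \<P>(\<omega> in sample_law M. (\<Sum>i<n. - Y (\<omega> i)) \<le> real n * - gu)"
  proof (rule neg.prob_sum_le_lower_bound[OF _ _ _ \<open>c < c'\<close>])
    show "s * - gam - ln (neg.mgf s) \<le> c" for s
      using rate[of "- s"] by (simp add: mgf_uminus)
  qed (use assms in auto)
  then show ?thesis
    by (simp add: sum_negf)
qed

end

locale llr_model = Ms: prob_space Ms + Mh: prob_space Mh
  for Ms Mh :: "'a measure" +
  assumes sets_eq: "sets Ms = sets Mh"
    and ac_Ms_Mh: "absolutely_continuous Ms Mh" and ac_Mh_Ms: "absolutely_continuous Mh Ms"
    and RN_deriv_moments: "\<And>M M' t. M \<in> {Ms, Mh} \<Longrightarrow> M' \<in> {Ms, Mh} \<Longrightarrow> t > 0 \<Longrightarrow>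
        (\<integral>\<^sup>+ x. ennreal (enn2real (RN_deriv M M' x) powr t) \<partial>M) < \<infinity>"
begin

lemma borel_measurable_RN_deriv_Mh_Ms[measurable]: "RN_deriv Mh Ms \<in> borel_measurable Ms"
  using borel_measurable_RN_deriv[of Mh Ms] by (simp add: measurable_cong_sets[OF sets_eq refl])

lemma borel_measurable_llr[measurable]: "llr Ms Mh \<in> borel_measurable Ms"
  unfolding llr_def by measurable

lemma AE_RN_deriv_reciprocal:
  "AE x in Ms. 0 < enn2real (RN_deriv Mh Ms x)
    \<and> enn2real (RN_deriv Ms Mh x) = 1 / enn2real (RN_deriv Mh Ms x)"
proof -
  have "density Ms (\<lambda>x. RN_deriv Ms Mh x * RN_deriv Mh Ms x)
      = density (density Ms (RN_deriv Ms Mh)) (RN_deriv Mh Ms)"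
    by (rule density_density_eq[symmetric]) auto
  also have "\<dots> = density Ms (\<lambda>_. 1)"
    using Ms.density_RN_deriv[OF ac_Ms_Mh sets_eq[symmetric]]
      Mh.density_RN_deriv[OF ac_Mh_Ms sets_eq]
    by (simp add: density_1)
  finally have "AE x in Ms. RN_deriv Ms Mh x * RN_deriv Mh Ms x = 1"
    by (subst (asm) Ms.density_unique_iff) auto
  then show ?thesis
  proof eventually_elim
    case (elim x)
    then have "enn2real (RN_deriv Ms Mh x * RN_deriv Mh Ms x) = 1"
      by simp
    then have "enn2real (RN_deriv Ms Mh x) * enn2real (RN_deriv Mh Ms x) = 1"
      by (simp add: enn2real_mult)
    then show ?case
      by (metis divide_eq_eq enn2real_nonneg less_eq_real_def mult_eq_0_iff zero_neq_one)
  qed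
qed

lemma AE_exp_mult_llr: "AE x in Ms. exp (s * llr Ms Mh x) = enn2real (RN_deriv Mh Ms x) powr s"
  using AE_RN_deriv_reciprocal by eventually_elim (simp add: llr_def powr_def mult.commute)

lemma nn_integral_RN_deriv_powr_finite:
  "(\<integral>\<^sup>+ x. ennreal (enn2real (RN_deriv Mh Ms x) powr s) \<partial>Ms) < \<infinity>"
proof (cases "s \<ge> 0")
  case True
  \<comment> \<open>change of measure to \<open>Mh\<close> raises the exponent by one\<close>
  have "AE x in Mh. RN_deriv Mh Ms x * ennreal (enn2real (RN_deriv Mh Ms x) powr s)
      = ennreal (enn2real (RN_deriv Mh Ms x) powr (s + 1))"
    using Mh.RN_deriv_finite[OF Ms.sigma_finite_measure_axioms ac_Mh_Ms sets_eq]
  proof eventually_elim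
    case (elim x)
    then have "RN_deriv Mh Ms x = ennreal (enn2real (RN_deriv Mh Ms x))"
      by (simp add: ennreal_enn2real_if)
    moreover have "r * r powr s = r powr (s + 1)" if "r \<ge> 0" for r :: real
      using that by (cases "r = 0") (auto simp: powr_add)
    ultimately show ?case
      by (metis enn2real_nonneg ennreal_mult' powr_nonneg_iff)
  qed
  then have "(\<integral>\<^sup>+ x. ennreal (enn2real (RN_deriv Mh Ms x) powr s) \<partial>Ms)
      = (\<integral>\<^sup>+ x. ennreal (enn2real (RN_deriv Mh Ms x) powr (s + 1)) \<partial>Mh)"
    by (subst (1) Mh.density_RN_deriv[OF ac_Mh_Ms sets_eq, symmetric])
      (simp add: nn_integral_density cong: nn_integral_cong_AE)
  also have "\<dots> < \<infinity>"
    using RN_deriv_moments[of Mh Ms "s + 1"] True by simp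
  finally show ?thesis .
next
  case False
  have "(\<integral>\<^sup>+ x. ennreal (enn2real (RN_deriv Mh Ms x) powr s) \<partial>Ms)
      = (\<integral>\<^sup>+ x. ennreal (enn2real (RN_deriv Ms Mh x) powr (- s)) \<partial>Ms)"
    using AE_RN_deriv_reciprocal
    by (intro nn_integral_cong_AE, eventually_elim) (simp add: powr_divide powr_minus_divide)
  also have "\<dots> < \<infinity>"
    using RN_deriv_moments[of Ms Mh "- s"] False by simp
  finally show ?thesis .
qed

lemma integrable_exp_mult_llr: "integrable Ms (\<lambda>x. exp (s * llr Ms Mh x))"
proof (rule integrableI_nonneg)
  have "(\<integral>\<^sup>+ x. ennreal (exp (s * llr Ms Mh x)) \<partial>Ms)
      = (\<integral>\<^sup>+ x. ennreal (enn2real (RN_deriv Mh Ms x) powr s) \<partial>Ms)"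
    using AE_exp_mult_llr[of s] by (intro nn_integral_cong_AE) auto
  then show "(\<integral>\<^sup>+ x. ennreal (exp (s * llr Ms Mh x)) \<partial>Ms) < \<infinity>"
    using nn_integral_RN_deriv_powr_finite by simp
qed auto

sublocale exp_moments Ms "llr Ms Mh"
  using borel_measurable_llr integrable_exp_mult_llr by unfold_locales

lemma mgf_eq_integral_RN_deriv_powr: "mgf s = (\<integral>x. enn2real (RN_deriv Mh Ms x) powr s \<partial>Ms)"
  unfolding mgf_def using AE_exp_mult_llr[of s] by (intro integral_cong_AE) auto

lemma le_rate_I: "ereal (s * g - ln (mgf s)) \<le> rate_I Ms Mh g"
  unfolding rate_I_def mgf_eq_integral_RN_deriv_powr by (rule SUP_upper) simp

lemma borel_measurable_Ln[measurable]: "Ln Ms Mh n \<in> borel_measurable (sample_law Ms)"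
  unfolding Ln_def sample_law_def by measurable

lemma rate_I_lessE:
  assumes "rate_I Ms Mh g < ereal lam"
  obtains c where "c < lam" "\<And>s. s * g - ln (mgf s) \<le> c"
proof -
  obtain c where "rate_I Ms Mh g < ereal c" "c < lam"
    using ereal_dense2[OF assms] by auto
  moreover have "s * g - ln (mgf s) \<le> c" if "rate_I Ms Mh g < ereal c" for s
    using le_rate_I[of s g] that by (metis ereal_less_eq(3) order.strict_trans1 less_imp_le)
  ultimately show ?thesis
    using that by blast
qed

lemma prob_Ln_le_lower_bound:
  assumes "gl \<le> (\<integral>x. llr Ms Mh x \<partial>Ms)" and "(INF g\<in>{..<gl}. rate_I Ms Mh g) < ereal lam"
  obtains c where "c < lam" "\<forall>\<^sub>F n in sequentially. exp (- (c * real n)) / 2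
    \<le> \<P>(\<omega> in sample_law Ms. Ln Ms Mh n \<omega> \<le> gl)"
proof -
  obtain gam where "gam < gl" and "rate_I Ms Mh gam < ereal lam"
    using assms(2) by (auto simp: INF_less_iff)
  obtain c where "c < lam" and rate: "\<And>s. s * gam - ln (mgf s) \<le> c"
    using rate_I_lessE[OF \<open>rate_I Ms Mh gam < ereal lam\<close>] by blast
  have "\<forall>\<^sub>F n in sequentially. exp (- ((c + lam) / 2 * real n)) / 2
    \<le> \<P>(\<omega> in sample_law Ms. (\<Sum>i<n. llr Ms Mh (\<omega> i)) \<le> real n * gl)"
    using \<open>gam < gl\<close> assms(1) rate \<open>c < lam\<close> by (intro prob_sum_le_lower_bound) auto
  then have "\<forall>\<^sub>F n in sequentially. exp (- ((c + lam) / 2 * real n)) / 2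
    \<le> \<P>(\<omega> in sample_law Ms. Ln Ms Mh n \<omega> \<le> gl)"
    using eventually_gt_at_top[of 0]
    by eventually_elim (simp add: Ln_def divide_le_eq mult.commute)
  moreover have "(c + lam) / 2 < lam"
    using \<open>c < lam\<close> by simp
  ultimately show ?thesis
    using that by blast
qed

lemma prob_Ln_ge_lower_bound:
  assumes "(\<integral>x. llr Ms Mh x \<partial>Ms) \<le> gu" and "(INF g\<in>{gu<..}. rate_I Ms Mh g) < ereal lam"
  obtains c where "c < lam" "\<forall>\<^sub>F n in sequentially. exp (- (c * real n)) / 2
    \<le> \<P>(\<omega> in sample_law Ms. gu \<le> Ln Ms Mh n \<omega>)"
proof -
  obtain gam where "gu < gam" and "rate_I Ms Mh gam < ereal lam"
    using assms(2) by (auto simp: INF_less_iff)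
  obtain c where "c < lam" and rate: "\<And>s. s * gam - ln (mgf s) \<le> c"
    using rate_I_lessE[OF \<open>rate_I Ms Mh gam < ereal lam\<close>] by blast
  have "\<forall>\<^sub>F n in sequentially. exp (- ((c + lam) / 2 * real n)) / 2
    \<le> \<P>(\<omega> in sample_law Ms. real n * gu \<le> (\<Sum>i<n. llr Ms Mh (\<omega> i)))"
    using \<open>gu < gam\<close> assms(1) rate \<open>c < lam\<close> by (intro prob_sum_ge_lower_bound) auto
  then have "\<forall>\<^sub>F n in sequentially. exp (- ((c + lam) / 2 * real n)) / 2
    \<le> \<P>(\<omega> in sample_law Ms. gu \<le> Ln Ms Mh n \<omega>)"
    using eventually_gt_at_top[of 0]
    by eventually_elim (simp add: Ln_def le_divide_eq mult.commute)
  moreover have "(c + lam) / 2 < lam"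
    using \<open>c < lam\<close> by simp
  ultimately show ?thesis
    using that by blast
qed

lemma prob_Ln_tails_lower_bound:
  assumes "gl \<le> (\<integral>x. llr Ms Mh x \<partial>Ms)" "(\<integral>x. llr Ms Mh x \<partial>Ms) \<le> gu"
    and "(INF g\<in>{..<gl}. rate_I Ms Mh g) < ereal lam" "(INF g\<in>{gu<..}. rate_I Ms Mh g) < ereal lam"
  obtains c where "c < lam" "\<forall>\<^sub>F n in sequentially.
    exp (- (c * real n)) / 2 \<le> \<P>(\<omega> in sample_law Ms. Ln Ms Mh n \<omega> \<le> gl)
    \<and> exp (- (c * real n)) / 2 \<le> \<P>(\<omega> in sample_law Ms. gu \<le> Ln Ms Mh n \<omega>)"
proof -
  obtain c1 where "c1 < lam" and left: "\<forall>\<^sub>F n in sequentially. exp (- (c1 * real n)) / 2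
    \<le> \<P>(\<omega> in sample_law Ms. Ln Ms Mh n \<omega> \<le> gl)"
    using prob_Ln_le_lower_bound[OF assms(1,3)] by blast
  obtain c2 where "c2 < lam" and right: "\<forall>\<^sub>F n in sequentially. exp (- (c2 * real n)) / 2
    \<le> \<P>(\<omega> in sample_law Ms. gu \<le> Ln Ms Mh n \<omega>)"
    using prob_Ln_ge_lower_bound[OF assms(2,4)] by blast
  have exp_max: "exp (- (max c1 c2 * real n)) \<le> exp (- (c1 * real n))"
    "exp (- (max c1 c2 * real n)) \<le> exp (- (c2 * real n))" for n
    by (simp_all add: mult_right_mono)
  from left right have "\<forall>\<^sub>F n in sequentially.
    exp (- (max c1 c2 * real n)) / 2 \<le> \<P>(\<omega> in sample_law Ms. Ln Ms Mh n \<omega> \<le> gl)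
    \<and> exp (- (max c1 c2 * real n)) / 2 \<le> \<P>(\<omega> in sample_law Ms. gu \<le> Ln Ms Mh n \<omega>)"
  proof eventually_elim
    case (elim n)
    then show ?case
      using exp_max[of n] by (intro conjI; linarith)
  qed
  moreover have "max c1 c2 < lam"
    using \<open>c1 < lam\<close> \<open>c2 < lam\<close> by simp
  ultimately show ?thesis
    using that by blast
qed

end

theorem lemma2:
  fixes X :: "'a::euclidean_space set"
    and Ms Mh :: "'a measure"
    and v :: "nat \<Rightarrow> real \<Rightarrow> real"
    and lam gl gu :: real
  assumes Ms_prob: "prob_space Ms" and Mh_prob: "prob_space Mh"
    and Ms_sets: "sets Ms = sets (restrict_space borel X)"
    and Mh_sets: "sets Mh = sets (restrict_space borel X)"
    and distinct: "Ms \<noteq> Mh"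
    and ac1: "absolutely_continuous Ms Mh" and ac2: "absolutely_continuous Mh Ms"
    and moments: "\<And>M M' t. M \<in> {Ms, Mh} \<Longrightarrow> M' \<in> {Ms, Mh} \<Longrightarrow> t > 0 \<Longrightarrow>
        (\<integral>\<^sup>+ x. ennreal (enn2real (RN_deriv M M' x) powr t) \<partial>M) < \<infinity>"
    and mono_v: "\<And>n. mono (v n)"
    and lam_pos: "lam > 0"
    and var_rate: "\<forall>\<epsilon>>0. eventually (\<lambda>n.
        integrable (sample_law Ms) (\<lambda>\<omega>. (v n (Ln Ms Mh n \<omega>))\<^sup>2) \<and>
        prob_space.variance (sample_law Ms) (\<lambda>\<omega>. v n (Ln Ms Mh n \<omega>))
          \<le> exp (- (lam - \<epsilon>) * real n)) sequentially"
    and interval: "gl \<le> (\<integral>x. llr Ms Mh x \<partial>Ms)" "(\<integral>x. llr Ms Mh x \<partial>Ms) \<le> gu"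
    and left: "(INF g\<in>{..<gl}. rate_I Ms Mh g) < ereal lam"
    and right: "(INF g\<in>{gu<..}. rate_I Ms Mh g) < ereal lam"
  shows "(\<lambda>n. v n gu - v n gl) \<longlonglongrightarrow> 0"
proof -
  interpret llr_model Ms Mh
    using Ms_prob Mh_prob Ms_sets Mh_sets ac1 ac2 moments
    by (simp add: llr_model_def llr_model_axioms_def)
  interpret S: prob_space "sample_law Ms"
    by (rule prob_space_sample_law[OF Ms_prob])
  obtain c where "c < lam" and tails: "\<forall>\<^sub>F n in sequentially.
    exp (- (c * real n)) / 2 \<le> \<P>(\<omega> in sample_law Ms. Ln Ms Mh n \<omega> \<le> gl)
    \<and> exp (- (c * real n)) / 2 \<le> \<P>(\<omega> in sample_law Ms. gu \<le> Ln Ms Mh n \<omega>)"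
    using prob_Ln_tails_lower_bound[OF interval left right] by blast
  define \<epsilon> where "\<epsilon> = (lam - c) / 2"
  have "\<epsilon> > 0" "c < lam - \<epsilon>"
    using \<open>c < lam\<close> by (simp_all add: \<epsilon>_def field_simps)
  have "\<forall>\<^sub>F n in sequentially. exp (- (c * real n)) * (v n gu - v n gl)\<^sup>2
      \<le> 8 * exp (- (lam - \<epsilon>) * real n)"
    using var_rate[rule_format, OF \<open>\<epsilon> > 0\<close>] tails
  proof eventually_elim
    case (elim n)
    let ?p = "min (\<P>(\<omega> in sample_law Ms. Ln Ms Mh n \<omega> \<le> gl))
      (\<P>(\<omega> in sample_law Ms. gu \<le> Ln Ms Mh n \<omega>))"
    have "exp (- (c * real n)) / 2 * ((v n gu - v n gl) / 2)\<^sup>2 \<le> ?p * ((v n gu - v n gl) / 2)\<^sup>2"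
      using elim by (intro mult_right_mono) auto
    also have "\<dots> \<le> S.variance (\<lambda>\<omega>. v n (Ln Ms Mh n \<omega>))"
      using elim interval by (intro S.variance_ge_of_mono mono_v borel_measurable_Ln) auto
    also have "\<dots> \<le> exp (- (lam - \<epsilon>) * real n)"
      using elim by simp
    finally show ?case
      by (simp add: power_divide)
  qed
  with \<open>c < lam - \<epsilon>\<close> show ?thesis
    by (rule tendsto_zero_of_exp_weighted_power2_le)
qed

end
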